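(* If nodes have no a priori knowledge, there is no distributed algorithm that decides if a configuration is feasible. That is, there is no DRIP $D$ together with a function $g$ mapping final histories to $\{\text{yes},\text{no}\}$ such that, for every configuration $G$, when all nodes of $G$ execute $D$: if $G$ is feasible then $g$ outputs "yes" at every node, and if $G$ is not feasible then $g$ outputs "no" at at least one node.
   Context: Model. A configuration is a finite simple undirected connected graph $G$ in which each node $v$ is tagged with a non-negative integer $t_v$ (wakeup tag). Nodes are anonymous and communicate in synchronous global rounds. A node $v$ wakes up in the first global round $r\le t_v$ in which it receives a message, if any, and otherwise in global round $t_v$; its local clock is $0$ in its wakeup round, it acts from local round $1$, and nodes do not know the global clock. In each round a node transmits a message to all neighbours, listens, or terminates. A listening node receives $M$ if exactly one neighbour transmits ($M$), hears collision noise (distinct from silence and messages) if at least two neighbours transmit, and silence otherwise; a transmitting node hears nothing. The history $\mathcal H_v[i]$ of $v$ in local round $i$ is $(\emptyset)$ (transmitted, silence, or spontaneous wakeup at $i=0$), $(M)$ (received $M$, or woken by $M$ at $i=0$), or $( * )$ (collision). A DRIP is a function $D$ from finite history vectors to $\{\mathit{listen},\mathit{transmit}(M),\mathit{terminate}\}$; each node $v$ in local round $i\ge1$ performs $D(\mathcal H_v[0\ldots i-1])$, and every node eventually terminates permanently (first at local round $done_v$); outputs are functions of $\mathcal H_v[0\ldots done_v]$. A decision function $f$ maps final histories to $\{0,1\}$; $(D,f)$ is a dedicated leader election algorithm for $G$ if, when all nodes of $G$ execute $D$, exactly one node gets output $1$; $G$ is feasible if such a pair exists. "No a priori knowledge"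 means the same DRIP and output function are used for all configurations. *)

theory Defs
  imports Main
begin

text \<open>Messages are natural numbers (encoding finite strings).\<close>

datatype entry = Sil | Msg nat | Coll
  \<comment> \<open>Sil: transmitted / silence / spontaneous wakeup (or terminated);
      Msg M: received M (or woken by M); Coll: collision noise\<close>

datatype action = Listen | Transmit nat | Terminate

type_synonym drip = "entry list \<Rightarrow> action"

text \<open>State of a node before/after a global round: None = still asleep,
  Some (history, terminated).\<close>
type_synonym state = "nat \<Rightarrow> (entry list \<times> bool) option"

definition config :: "nat set \<Rightarrow> (nat \<Rightarrow> nat \<Rightarrow> bool) \<Rightarrow> (nat \<Rightarrow> nat) \<Rightarrow> bool" where
  "config V E t \<longleftrightarrow> finite V \<and> V \<noteq> {} \<and>
     (\<forall>u v. E u v \<longrightarrow> u \<in> V \<and> v \<in> V) \<and>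
     (\<forall>u v. E u v \<longrightarrow> E v u) \<and> (\<forall>v. \<not> E v v) \<and>
     (\<forall>u\<in>V. \<forall>v\<in>V. E\<^sup>*\<^sup>* u v)"

definition transmits :: "drip \<Rightarrow> state \<Rightarrow> nat \<Rightarrow> nat option" where
  "transmits D s u = (case s u of
      Some (hs, False) \<Rightarrow> (case D hs of Transmit m \<Rightarrow> Some m | _ \<Rightarrow> None)
    | _ \<Rightarrow> None)"

definition reception :: "drip \<Rightarrow> nat set \<Rightarrow> (nat \<Rightarrow> nat \<Rightarrow> bool) \<Rightarrow> state \<Rightarrow> nat \<Rightarrow> entry" where
  "reception D V E s v = (let T = {u \<in> V. E v u \<and> transmits D s u \<noteq> None} in
     if T = {} then Sil
     else if card T = 1 then Msg (the (transmits D s (the_elem T)))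
     else Coll)"

definition step :: "drip \<Rightarrow> nat set \<Rightarrow> (nat \<Rightarrow> nat \<Rightarrow> bool) \<Rightarrow> (nat \<Rightarrow> nat) \<Rightarrow> nat
    \<Rightarrow> state \<Rightarrow> state" where
  "step D V E t r s v = (case s v of
      None \<Rightarrow> (case reception D V E s v of
                 Msg m \<Rightarrow> Some ([Msg m], False)
               | _ \<Rightarrow> (if r = t v then Some ([Sil], False) else None))
    | Some (hs, True) \<Rightarrow> Some (hs, True)
    | Some (hs, False) \<Rightarrow> (case D hs of
          Terminate \<Rightarrow> Some (hs @ [Sil], True)
        | Transmit m \<Rightarrow> Some (hs @ [Sil], False)
        | Listen \<Rightarrow> Some (hs @ [reception D V E s v], False)))"

text \<open>pre D V E t r = state before global round r.\<close>
primrec pre :: "drip \<Rightarrow> nat set \<Rightarrow> (nat \<Rightarrow> nat \<Rightarrow> bool) \<Rightarrow> (nat \<Rightarrow> nat) \<Rightarrow> nat \<Rightarrow> state" where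
  "pre D V E t 0 = (\<lambda>_. None)"
| "pre D V E t (Suc r) = step D V E t r (pre D V E t r)"

definition all_terminate :: "drip \<Rightarrow> nat set \<Rightarrow> (nat \<Rightarrow> nat \<Rightarrow> bool) \<Rightarrow> (nat \<Rightarrow> nat) \<Rightarrow> bool" where
  "all_terminate D V E t \<longleftrightarrow> (\<forall>v\<in>V. \<exists>r hs. pre D V E t r v = Some (hs, True))"

definition final_hist :: "drip \<Rightarrow> nat set \<Rightarrow> (nat \<Rightarrow> nat \<Rightarrow> bool) \<Rightarrow> (nat \<Rightarrow> nat) \<Rightarrow> nat \<Rightarrow> entry list" where
  "final_hist D V E t v = (SOME hs. \<exists>r. pre D V E t r v = Some (hs, True))"

definition leader_election :: "drip \<Rightarrow> (entry list \<Rightarrow> bool) \<Rightarrow> nat set \<Rightarrow> (nat \<Rightarrow> nat \<Rightarrow> bool)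
    \<Rightarrow> (nat \<Rightarrow> nat) \<Rightarrow> bool" where
  "leader_election D f V E t \<longleftrightarrow> all_terminate D V E t \<and>
     card {v \<in> V. f (final_hist D V E t v)} = 1"

definition feasible :: "nat set \<Rightarrow> (nat \<Rightarrow> nat \<Rightarrow> bool) \<Rightarrow> (nat \<Rightarrow> nat) \<Rightarrow> bool" where
  "feasible V E t \<longleftrightarrow> (\<exists>D f. leader_election D f V E t)"

end

theory Submission
  imports Defs
begin

text \<open>A single node and the edge \<open>0 \<longleftrightarrow> 1\<close> with equal wakeup tags cannot be told apart
  from the inside: as long as both ends of the edge are in the same state they act alike, so
  neither ever hears anything its partner sends, and each runs exactly as the lone node would.
  The lone node is trivially feasible, so a decider must answer ``yes'' at it, hence at both ends
  of the edge. But the edge is infeasible, since the two ends have identical final histories and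
  so any output function selects none or both of them.\<close>

definition edge01 :: "nat \<Rightarrow> nat \<Rightarrow> bool" where
  "edge01 u v \<longleftrightarrow> (u = 0 \<and> v = 1) \<or> (u = 1 \<and> v = 0)"

lemma reception_no_transmitting_neighbour:
  assumes "\<And>u. u \<in> V \<Longrightarrow> E v u \<Longrightarrow> transmits D s u = None"
  shows "reception D V E s v = Sil"
  using assms by (simp add: reception_def)

lemma transmits_cong: "s u = s' u' \<Longrightarrow> transmits D s u = transmits D s' u'"
  by (simp add: transmits_def)

text \<open>The reception of a node only matters in a round in which it does not transmit.\<close>

lemma step_cong:
  assumes "s v = s' v'" and "t v = t' v'"
    and "transmits D s v = None \<Longrightarrow> reception D V E s v = reception D V' E' s' v'"
  shows "step D V E t r s v = step D V' E' t' r s' v'"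
proof (cases "s v")
  case None
  then show ?thesis
    using assms by (simp add: step_def transmits_def)
next
  case (Some st)
  then obtain hs halted where "s v = Some (hs, halted)"
    by (cases st) auto
  then show ?thesis
    using assms by (cases halted; cases "D hs") (simp_all add: step_def transmits_def)
qed

lemma step_edge01_eq_single:
  assumes twins: "s 0 = s 1" and tags: "t 0 = t 1"
    and single: "s' 0 = s 0"
  shows "step D {0, 1} edge01 t r s 0 = step D {0} (\<lambda>_ _. False) t r s' 0"
    and "step D {0, 1} edge01 t r s 1 = step D {0} (\<lambda>_ _. False) t r s' 0"
proof -
  have single_silent: "reception D {0} (\<lambda>_ _. False) s' 0 = Sil"
    by (rule reception_no_transmitting_neighbour) simp
  have transmits_twins: "transmits D s 1 = transmits D s 0"
    using twins by (rule transmits_cong[symmetric])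
  have silent0: "reception D {0, 1} edge01 s 0 = Sil" if "transmits D s 0 = None"
    using that transmits_twins
    by (intro reception_no_transmitting_neighbour) (auto simp: edge01_def)
  have silent1: "reception D {0, 1} edge01 s 1 = Sil" if "transmits D s 1 = None"
    using that transmits_twins
    by (intro reception_no_transmitting_neighbour) (auto simp: edge01_def)
  show "step D {0, 1} edge01 t r s 0 = step D {0} (\<lambda>_ _. False) t r s' 0"
    by (rule step_cong) (use single silent0 single_silent in simp_all)
  show "step D {0, 1} edge01 t r s 1 = step D {0} (\<lambda>_ _. False) t r s' 0"
    by (rule step_cong) (use single twins tags silent1 single_silent in simp_all)
qed

lemma pre_edge01_eq_single:
  assumes "t 0 = t 1"
  shows "pre D {0, 1} edge01 t r 0 = pre D {0} (\<lambda>_ _. False) t r 0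
    \<and> pre D {0, 1} edge01 t r 1 = pre D {0} (\<lambda>_ _. False) t r 0"
proof (induction r)
  case 0
  show ?case by simp
next
  case (Suc r)
  then have "pre D {0, 1} edge01 t r 0 = pre D {0, 1} edge01 t r 1"
    and "pre D {0} (\<lambda>_ _. False) t r 0 = pre D {0, 1} edge01 t r 0"
    by simp_all
  from step_edge01_eq_single[where s = "pre D {0, 1} edge01 t r"
      and s' = "pre D {0} (\<lambda>_ _. False) t r", OF this(1) assms this(2)]
  show ?case
    by (simp only: pre.simps)
qed

lemma final_hist_edge01_eq_single:
  assumes "t 0 = t 1" and "v \<in> {0, 1}"
  shows "final_hist D {0, 1} edge01 t v = final_hist D {0} (\<lambda>_ _. False) t 0"
proof -
  have "pre D {0, 1} edge01 t r v = pre D {0} (\<lambda>_ _. False) t r 0" for r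
    using assms(2) pre_edge01_eq_single[OF assms(1)] by auto
  then show ?thesis
    by (simp add: final_hist_def)
qed

lemma config_single: "config {0} (\<lambda>_ _. False) t"
  by (simp add: config_def)

lemma config_edge01: "config {0, 1} edge01 t"
proof -
  have "edge01\<^sup>*\<^sup>* 0 1" "edge01\<^sup>*\<^sup>* 1 0"
    by (auto simp: edge01_def)
  then show ?thesis
    by (auto simp: config_def edge01_def)
qed

lemma pre_single_asleep:
  "r \<le> t 0 \<Longrightarrow> pre D {0} (\<lambda>_ _. False) t r 0 = None"
proof (induction r)
  case (Suc r)
  then show ?case
    by (simp add: step_def reception_no_transmitting_neighbour)
qed simp

text \<open>The lone node elects itself: it wakes up in round \<open>t 0\<close> and terminates one round later.\<close>

lemma feasible_single: "feasible {0} (\<lambda>_ _. False) t"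
proof -
  let ?D = "\<lambda>_. Terminate"
  have "pre ?D {0} (\<lambda>_ _. False) t (Suc (Suc (t 0))) 0 = Some ([Sil, Sil], True)"
    using pre_single_asleep[of "t 0" t ?D]
    by (simp add: step_def reception_no_transmitting_neighbour)
  then have "all_terminate ?D {0} (\<lambda>_ _. False) t"
    unfolding all_terminate_def by blast
  then have "leader_election ?D (\<lambda>_. True) {0} (\<lambda>_ _. False) t"
    by (simp add: leader_election_def)
  then show ?thesis
    unfolding feasible_def by blast
qed

lemma not_feasible_edge01:
  assumes "t 0 = t 1"
  shows "\<not> feasible {0, 1} edge01 t"
proof
  assume "feasible {0, 1} edge01 t"
  then obtain D f where one_leader: "card {v \<in> {0, 1}. f (final_hist D {0, 1} edge01 t v)} = 1"
    unfolding feasible_def leader_election_def by blast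
  have "{v \<in> {0, 1}. f (final_hist D {0, 1} edge01 t v)} =
      {v \<in> {0, 1}. f (final_hist D {0} (\<lambda>_ _. False) t 0)}"
  proof (rule Collect_cong)
    fix v
    show "v \<in> {0, 1} \<and> f (final_hist D {0, 1} edge01 t v) \<longleftrightarrow>
        v \<in> {0, 1} \<and> f (final_hist D {0} (\<lambda>_ _. False) t 0)"
      using final_hist_edge01_eq_single[OF assms, of v D] by metis
  qed
  also have "\<dots> = (if f (final_hist D {0} (\<lambda>_ _. False) t 0) then {0, 1} else {})"
    by auto
  finally show False
    using one_leader by (simp split: if_splits)
qed

lemma no_feasibility_decider:
  assumes yes: "\<And>V E t. config V E t \<Longrightarrow> feasible V E t \<Longrightarrow> \<forall>v\<in>V. g (final_hist D V E t v)"
    and no: "\<And>V E t. config V E t \<Longrightarrow> \<not> feasible V E t \<Longrightarrow> \<exists>v\<in>V. \<not> g (final_hist D V E t v)"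
  shows False
proof -
  let ?t = "\<lambda>_. 0 :: nat"
  have "\<not> feasible {0, 1} edge01 ?t"
    by (rule not_feasible_edge01) simp
  with no[OF config_edge01] obtain v
    where "v \<in> {0, 1}" and rejected: "\<not> g (final_hist D {0, 1} edge01 ?t v)"
    by blast
  have "g (final_hist D {0} (\<lambda>_ _. False) ?t 0)"
    using yes[OF config_single feasible_single] by blast
  moreover have "final_hist D {0, 1} edge01 ?t v = final_hist D {0} (\<lambda>_ _. False) ?t 0"
    using final_hist_edge01_eq_single[of ?t v D] \<open>v \<in> {0, 1}\<close> by simp
  ultimately show False
    using rejected by simp
qed

theorem proposition5:
  shows "\<not> (\<exists>(D :: drip) (g :: entry list \<Rightarrow> bool).
            \<forall>V E t. config V E t \<longrightarrow>
              all_terminate D V E t \<and>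
              (feasible V E t \<longrightarrow> (\<forall>v\<in>V. g (final_hist D V E t v))) \<and>
              (\<not> feasible V E t \<longrightarrow> (\<exists>v\<in>V. \<not> g (final_hist D V E t v))))"
proof (intro notI, elim exE)
  fix D g
  assume "\<forall>V E t. config V E t \<longrightarrow> all_terminate D V E t \<and>
      (feasible V E t \<longrightarrow> (\<forall>v\<in>V. g (final_hist D V E t v))) \<and>
      (\<not> feasible V E t \<longrightarrow> (\<exists>v\<in>V. \<not> g (final_hist D V E t v)))"
  then show False
    by (intro no_feasibility_decider[where D = D and g = g]) blast+
qed

end
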